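(* Assume $\Omega^*\neq\emptyset$, let $\sigma\in[0,c]$, and let an initial point $\omega_0=(Z_0,E_0,-\lambda_0)$ be given. Then there exist parameters $(W_k,\theta_k,\beta_k)\in\mathcal{S}(\sigma,A)$, $k\ge0$, such that the sequence $\{\omega_k\}$ generated by the iteration below converges to a solution $\omega^*\in\Omega^*$.
   Context: Let $A\in\mathbb{R}^{m\times d}$, $X\in\mathbb{R}^{m\times n}$, and let $f:\mathbb{R}^{d\times n}\to\mathbb{R}$, $g:\mathbb{R}^{m\times n}\to\mathbb{R}$ be convex. Consider the problem $\min_{Z,E} f(Z)+g(E)$ subject to $X=AZ+E$. Triples are written $\omega=(Z,E,-\lambda)$ with $\lambda\in\mathbb{R}^{m\times n}$ a Lagrange multiplier. $\Omega^*$ is the solution set: the set of $\omega^*=(Z^*,E^*,-\lambda^* )$ with $0\in\partial f(Z^* )+A^\top\lambda^*$, $0\in\partial g(E^* )+\lambda^*$, $AZ^*+E^*=X$. $\circ$ is the Hadamard product; $\beta^{-1}$ is the entrywise reciprocal; $\tfrac{\theta}{2}\circ\|M\|_F^2:=\tfrac12\sum_{ij}\theta_{ij}M_{ij}^2$. Iteration (D-LADMM), with parameters $W_k\in\mathbb{R}^{m\times d}$, $\theta_k\in\mathbb{R}^{d\times n}$, $\beta_k\in\mathbb{R}^{m\times n}$: $Z_{k+1}=\arg\min_Z\{ f(Z)+\tfrac{\theta_k}{2}\circ\|Z-Z_k+\theta_k^{-1}\circ W_k^\top(\lambda_k+\beta_k\circ(AZ_k+E_k-X))\|_F^2\}$,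 $E_{k+1}=\arg\min_E\{g(E)+\tfrac{\beta_k}{2}\circ\|E-X+AZ_{k+1}+\beta_k^{-1}\circ\lambda_k\|_F^2\}$, $\lambda_{k+1}=\lambda_k+\beta_k\circ(AZ_{k+1}+E_{k+1}-X)$. $\mathcal{S}(\sigma,A)$ is the set of $(W,\theta,\beta)$ with $\|W-A\|\le\sigma$ (spectral norm), $\theta,\beta$ entrywise positive, and $Z\mapsto\theta\circ Z-W^\top(\beta\circ(AZ))$ positive definite ($\langle\cdot(Z),Z\rangle>0$ for $Z\neq0$). Standing assumption: there is a constant $c$ such that $\mathcal{S}(\sigma,A)\ne\emptyset$ for all $0\le\sigma\le c$. *)

theory Defs
  imports "HOL-Analysis.Analysis"
begin

text \<open>Matrices are rendered as real^'c^'r (rows indexed by 'r, columns by 'c).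
  Frobenius inner product = the library inner product on nested vectors.\<close>

definition hprod :: "real^'c^'r \<Rightarrow> real^'c^'r \<Rightarrow> real^'c^'r" where
  "hprod a b = (\<chi> i j. a$i$j * b$i$j)"

definition hinv :: "real^'c^'r \<Rightarrow> real^'c^'r" where
  "hinv a = (\<chi> i j. inverse (a$i$j))"

definition wsq :: "real^'c^'r \<Rightarrow> real^'c^'r \<Rightarrow> real" where
  "wsq \<theta> M = (1/2) * (\<Sum>i\<in>UNIV. \<Sum>j\<in>UNIV. \<theta>$i$j * (M$i$j)^2)"

definition subdiff :: "('a::real_inner \<Rightarrow> real) \<Rightarrow> 'a \<Rightarrow> 'a set" where
  "subdiff f x = {G. \<forall>y. f y \<ge> f x + inner G (y - x)}"

definition spec_norm :: "real^'c^'r \<Rightarrow> real" where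
  "spec_norm M = onorm (\<lambda>x. M *v x)"

definition is_argmin :: "('a \<Rightarrow> real) \<Rightarrow> 'a \<Rightarrow> bool" where
  "is_argmin \<phi> x \<longleftrightarrow> (\<forall>y. \<phi> x \<le> \<phi> y)"

definition S_set :: "real \<Rightarrow> real^'d^'m \<Rightarrow> ((real^'d^'m) \<times> (real^'n^'d) \<times> (real^'n^'m)) set" where
  "S_set \<sigma> A = {(W, \<theta>, \<beta>). spec_norm (W - A) \<le> \<sigma>
      \<and> (\<forall>i j. \<theta>$i$j > 0) \<and> (\<forall>i j. \<beta>$i$j > 0)
      \<and> (\<forall>Z. Z \<noteq> 0 \<longrightarrow> inner (hprod \<theta> Z - transpose W ** hprod \<beta> (A ** Z)) Z > 0)}"

definition Omega_star :: "(real^'n^'d \<Rightarrow> real) \<Rightarrow> (real^'n^'m \<Rightarrow> real) \<Rightarrow> real^'d^'m \<Rightarrow> real^'n^'m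
    \<Rightarrow> ((real^'n^'d) \<times> (real^'n^'m) \<times> (real^'n^'m)) set" where
  "Omega_star f g A X = {(Z, E, - lam) | Z E lam.
      - (transpose A ** lam) \<in> subdiff f Z \<and> - lam \<in> subdiff g E \<and> A ** Z + E = X}"

definition dladmm_seq ::
  "(real^'n^'d \<Rightarrow> real) \<Rightarrow> (real^'n^'m \<Rightarrow> real) \<Rightarrow> real^'d^'m \<Rightarrow> real^'n^'m
   \<Rightarrow> (nat \<Rightarrow> real^'d^'m) \<Rightarrow> (nat \<Rightarrow> real^'n^'d) \<Rightarrow> (nat \<Rightarrow> real^'n^'m)
   \<Rightarrow> (nat \<Rightarrow> real^'n^'d) \<Rightarrow> (nat \<Rightarrow> real^'n^'m) \<Rightarrow> (nat \<Rightarrow> real^'n^'m) \<Rightarrow> bool" where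
  "dladmm_seq f g A X W \<theta> \<beta> Z E lam \<longleftrightarrow> (\<forall>k.
     is_argmin (\<lambda>Y. f Y + wsq (\<theta> k) (Y - Z k + hprod (hinv (\<theta> k))
          (transpose (W k) ** (lam k + hprod (\<beta> k) (A ** Z k + E k - X))))) (Z (Suc k))
   \<and> is_argmin (\<lambda>Y. g Y + wsq (\<beta> k) (Y - X + A ** Z (Suc k) + hprod (hinv (\<beta> k)) (lam k))) (E (Suc k))
   \<and> lam (Suc k) = lam k + hprod (\<beta> k) (A ** Z (Suc k) + E (Suc k) - X))"

end

theory Submission
  imports Defs
begin

(*
  Take W_k = A, theta_k = t and beta_k = 1 with ||A Z||^2 + ||Z||^2 <= t ||Z||^2. These parameters
  lie in S(sigma, A) for every sigma >= 0, and the
  two proximal steps of D-LADMM become the subgradient inclusions of linearized ADMM.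
  For a KKT point w = (Zs, Es, ls), monotonicity of the subdifferentials shows that the energy
  t ||Z - Zs||^2 - ||A (Z - Zs)||^2 + ||E - Es||^2 + ||lam - ls||^2 of the error drops at least
  by the energy of the step. Hence the iterates are bounded and the steps are square summable, so
  the residual A Z + E - X tends to 0 and every cluster point is again a KKT point, the graph of the
  subdifferential of a continuous convex function being closed. Taking a cluster point as w, the
  energy is decreasing and tends to 0 along a subsequence, hence along the whole sequence.
*)

lemma subdiff_monotone:
  assumes "p \<in> subdiff f x" and "q \<in> subdiff f y"
  shows "0 \<le> inner (p - q) (x - y)"
proof -
  have "f y \<ge> f x + inner p (y - x)" and "f x \<ge> f y + inner q (x - y)"
    using assms by (auto simp: subdiff_def)
  then show ?thesis by (simp add: inner_diff_left inner_diff_right algebra_simps)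
qed

lemma subdiff_limit:
  fixes f :: "'a::real_inner \<Rightarrow> real"
  assumes "continuous_on UNIV f" and "x \<longlonglongrightarrow> x0" and "p \<longlonglongrightarrow> p0"
    and "\<And>k. p k \<in> subdiff f (x k)"
  shows "p0 \<in> subdiff f x0"
  unfolding subdiff_def
proof (intro CollectI allI)
  fix y
  have "(\<lambda>k. f (x k) + inner (p k) (y - x k)) \<longlonglongrightarrow> f x0 + inner p0 (y - x0)"
    using assms(1-3) by (intro tendsto_intros continuous_on_tendsto_compose[of UNIV f]) auto
  moreover have "f (x k) + inner (p k) (y - x k) \<le> f y" for k
    using assms(4) by (auto simp: subdiff_def)
  ultimately show "f x0 + inner p0 (y - x0) \<le> f y"
    by (intro tendsto_upperbound[of _ _ sequentially]) (auto intro: always_eventually)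
qed

lemma prox_argmin_subdiff:
  fixes f :: "'a::real_inner \<Rightarrow> real"
  assumes "convex_on UNIV f" and "t > 0"
    and argmin: "\<And>y. f x + t/2 * norm (x - c)^2 \<le> f y + t/2 * norm (y - c)^2"
  shows "(- t) *\<^sub>R (x - c) \<in> subdiff f x"
  unfolding subdiff_def
proof (intro CollectI allI)
  fix y
  define d where "d = y - x"
  have bound: "f x \<le> f y + t * inner (x - c) d + s * (t/2 * norm d^2)" if "0 < s" "s < 1" for s
  proof -
    have "f x + t/2 * norm (x - c)^2 \<le> f (x + s *\<^sub>R d) + t/2 * norm (x + s *\<^sub>R d - c)^2"
      by (rule argmin)
    also have "f (x + s *\<^sub>R d) \<le> (1 - s) * f x + s * f y"
      using convex_onD[OF assms(1), of s x y] that by (simp add: d_def algebra_simps)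
    also have "norm (x + s *\<^sub>R d - c)^2 = norm (x - c)^2 + 2 * s * inner (x - c) d + s^2 * norm d^2"
      unfolding power2_norm_eq_inner
      by (simp add: inner_add_left inner_add_right inner_diff_left inner_diff_right
          inner_commute algebra_simps power2_eq_square)
    finally have "s * f x \<le> s * (f y + t * inner (x - c) d + s * (t/2 * norm d^2))"
      by (simp add: algebra_simps power2_eq_square)
    then show ?thesis using \<open>0 < s\<close> by simp
  qed
  have "((\<lambda>s. f y + t * inner (x - c) d + s * (t/2 * norm d^2)) \<longlongrightarrow> f y + t * inner (x - c) d)
      (at_right 0)"
    by (auto intro!: tendsto_eq_intros)
  moreover have "eventually (\<lambda>s. f x \<le> f y + t * inner (x - c) d + s * (t/2 * norm d^2)) (at_right 0)"
    using eventually_at_right_real[OF zero_less_one] by (rule eventually_mono) (use bound in force)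
  ultimately have "f x \<le> f y + t * inner (x - c) d"
    by (intro tendsto_lowerbound) auto
  then show "f x + inner ((- t) *\<^sub>R (x - c)) (y - x) \<le> f y"
    by (simp add: d_def)
qed

lemma Lim_null_comparison_sq:
  fixes v :: "'a \<Rightarrow> 'b::real_normed_vector"
  assumes "eventually (\<lambda>x. norm (v x)^2 \<le> D x) F" and "(D \<longlongrightarrow> 0) F"
  shows "(v \<longlongrightarrow> 0) F"
proof (rule Lim_null_comparison)
  show "eventually (\<lambda>x. norm (v x) \<le> sqrt (D x)) F"
    using assms(1) by eventually_elim (simp add: real_le_rsqrt)
  show "((\<lambda>x. sqrt (D x)) \<longlongrightarrow> 0) F"
    using tendsto_real_sqrt[OF assms(2)] by simp
qed

lemma decseq_tendsto_of_subseq: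
  fixes W :: "nat \<Rightarrow> real"
  assumes "decseq W" and "strict_mono r" and "(W \<circ> r) \<longlonglongrightarrow> l"
  shows "W \<longlonglongrightarrow> l"
proof -
  have "decseq (W \<circ> r)"
    using assms(1,2) by (simp add: decseq_def strict_mono_leD)
  then have "l \<le> W n" for n
    using decseq_ge[OF _ assms(3)] assms(1) seq_suble[OF assms(2), of n]
    by (metis comp_apply decseqD order_trans)
  then obtain l' where "W \<longlonglongrightarrow> l'"
    using decseq_convergent[OF assms(1)] by blast
  moreover have "l' = l"
    using LIMSEQ_unique[OF LIMSEQ_subseq_LIMSEQ[OF \<open>W \<longlonglongrightarrow> l'\<close> assms(2)] assms(3)] .
  ultimately show ?thesis by simp
qed

lemma linear_matrix_matrix_mult: "linear (\<lambda>Z::real^'c^'b. (A::real^'b^'a) ** Z)"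
  by (rule linearI)
    (auto simp: matrix_add_ldistrib matrix_matrix_mult_def vec_eq_iff sum_distrib_left sum.distrib algebra_simps)

lemma inner_transpose_matrix_mult:
  "inner (transpose (A::real^'b^'a) ** Y) (Z::real^'c^'b) = inner Y (A ** Z)"
proof -
  have "inner (transpose A ** Y) Z = (\<Sum>i\<in>UNIV. \<Sum>a\<in>UNIV. \<Sum>j\<in>UNIV. A$j$i * Y$j$a * Z$i$a)"
    by (simp add: inner_vec_def matrix_matrix_mult_def transpose_def sum_distrib_right)
  also have "\<dots> = (\<Sum>j\<in>UNIV. \<Sum>a\<in>UNIV. \<Sum>i\<in>UNIV. A$j$i * Y$j$a * Z$i$a)"
    by (subst sum.swap, subst (2) sum.swap, subst sum.swap) (rule refl)
  also have "\<dots> = inner Y (A ** Z)"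
    by (simp add: inner_vec_def matrix_matrix_mult_def sum_distrib_left algebra_simps)
  finally show ?thesis .
qed

lemma adjoint_matrix_matrix_mult:
  "adjoint (\<lambda>Z::real^'c^'b. (A::real^'b^'a) ** Z) = (\<lambda>Y. transpose A ** Y)"
  by (rule adjoint_unique) (metis inner_commute inner_transpose_matrix_mult)

lemma hprod_const: "hprod (\<chi> i j. t) M = t *\<^sub>R M"
  by (simp add: hprod_def vec_eq_iff)

lemma hinv_const: "hinv (\<chi> i j. t) = (\<chi> i j. inverse t)"
  by (simp add: hinv_def)

lemma wsq_const: "wsq (\<chi> i j. t) M = t/2 * norm M^2"
proof -
  have "norm M^2 = (\<Sum>i\<in>UNIV. \<Sum>j\<in>UNIV. (M$i$j)^2)"
    unfolding power2_norm_eq_inner by (simp add: inner_vec_def power2_eq_square)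
  then show ?thesis by (simp add: wsq_def sum_distrib_left)
qed

lemma admm_descent_algebra:
  fixes a a0 :: "'z::real_inner" and x x0 e e0 l l0 :: "'e::real_inner"
  assumes "l = l0 + x + e"
    and "0 \<le> - t * inner (a - a0) a - inner (l0 + x0 + e0) x"
    and "0 \<le> - inner l e" and "0 \<le> - inner (x + e) (e - e0)"
  shows "t * norm a^2 - norm x^2 + norm e^2 + norm l^2
      + (t * norm (a - a0)^2 - norm (x - x0)^2 + norm (e - e0)^2 + norm (l - l0)^2)
    \<le> t * norm a0^2 - norm x0^2 + norm e0^2 + norm l0^2"
  using assms
  by (simp add: power2_norm_eq_inner inner_add_left inner_add_right inner_diff_left
      inner_diff_right inner_commute algebra_simps)

definition kkt_point ::
  "('z::real_inner \<Rightarrow> real) \<Rightarrow> ('e::real_inner \<Rightarrow> real) \<Rightarrow> ('z \<Rightarrow> 'e) \<Rightarrow> 'e \<Rightarrow> 'z \<times> 'e \<times> 'e \<Rightarrow> bool"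
  where "kkt_point f g L X = (\<lambda>(Zs, Es, ls).
    - adjoint L ls \<in> subdiff f Zs \<and> - ls \<in> subdiff g Es \<and> L Zs + Es = X)"

(* E_step is required at k = 0 as well, which is why the D-LADMM sequences are started at their
   first iterate when the locale is applied. *)
locale linearized_admm =
  fixes f :: "'z::euclidean_space \<Rightarrow> real" and g :: "'e::euclidean_space \<Rightarrow> real"
    and L :: "'z \<Rightarrow> 'e" and X :: 'e and t :: real
    and Z :: "nat \<Rightarrow> 'z" and E lam :: "nat \<Rightarrow> 'e"
  assumes convex_f: "convex_on UNIV f" and convex_g: "convex_on UNIV g"
    and linear_L: "linear L"
    and t_dominates: "\<And>z. norm (L z)^2 + norm z^2 \<le> t * norm z^2"
    and Z_step: "\<And>k. (- t) *\<^sub>R (Z (Suc k) - Z k) - adjoint L (lam k + (L (Z k) + E k - X))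
      \<in> subdiff f (Z (Suc k))"
    and E_step: "\<And>k. - lam k \<in> subdiff g (E k)"
    and lam_step: "\<And>k. lam (Suc k) = lam k + (L (Z (Suc k)) + E (Suc k) - X)"
begin

definition iterate :: "nat \<Rightarrow> 'z \<times> 'e \<times> 'e"
  where "iterate k = (Z k, E k, lam k)"

definition energy :: "'z \<times> 'e \<times> 'e \<Rightarrow> real"
  where "energy = (\<lambda>(z, e, l). t * norm z^2 - norm (L z)^2 + norm e^2 + norm l^2)"

lemma energy_descent:
  assumes "kkt_point f g L X w"
  shows "energy (iterate (Suc k) - w) + energy (iterate (Suc k) - iterate k) \<le> energy (iterate k - w)"
proof -
  obtain Zs Es ls where w: "w = (Zs, Es, ls)" by (cases w)
  have sol: "- adjoint L ls \<in> subdiff f Zs" "- ls \<in> subdiff g Es" "X = L Zs + Es"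
    using assms by (simp_all add: w kkt_point_def)
  define a a0 e e0 l l0 where "a = Z (Suc k) - Zs" and "a0 = Z k - Zs"
    and "e = E (Suc k) - Es" and "e0 = E k - Es" and "l = lam (Suc k) - ls" and "l0 = lam k - ls"
  note defs = a_def a0_def e_def e0_def l_def l0_def
  note L_diff = linear_diff[OF linear_L] and adj_diff = linear_diff[OF adjoint_linear[OF linear_L]]
  have multiplier: "l = l0 + L a + e"
    unfolding defs lam_step sol(3) L_diff by (simp add: algebra_simps)
  have shifted: "lam k + (L (Z k) + E k - X) - ls = l0 + L a0 + e0"
    unfolding defs sol(3) L_diff by (simp add: algebra_simps)
  let ?G = "(- t) *\<^sub>R (Z (Suc k) - Z k) - adjoint L (lam k + (L (Z k) + E k - X))"
  have "?G - - adjoint L ls = (- t) *\<^sub>R (a - a0) - (adjoint L (lam k + (L (Z k) + E k - X)) - adjoint L ls)"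
    by (simp add: defs algebra_simps)
  also have "\<dots> = (- t) *\<^sub>R (a - a0) - adjoint L (l0 + L a0 + e0)"
    unfolding adj_diff[symmetric] shifted ..
  finally have mono_f: "0 \<le> - t * inner (a - a0) a - inner (l0 + L a0 + e0) (L a)"
    using subdiff_monotone[OF Z_step sol(1), of k]
    by (simp add: a_def[symmetric] inner_diff_left adjoint_clauses(2)[OF linear_L])
  have mono_g: "0 \<le> - inner l e"
    using subdiff_monotone[OF E_step sol(2), of "Suc k"] by (simp add: defs inner_diff_left)
  have "0 \<le> inner (- (l - l0)) (e - e0)"
    using subdiff_monotone[OF E_step E_step, of "Suc k" k] by (simp add: defs)
  then have mono_g': "0 \<le> - inner (L a + e) (e - e0)"
    by (simp add: multiplier inner_diff_left inner_add_left)
  have "a - a0 = Z (Suc k) - Z k" "L a - L a0 = L (Z (Suc k) - Z k)"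
    "e - e0 = E (Suc k) - E k" "l - l0 = lam (Suc k) - lam k"
    by (simp_all add: defs L_diff)
  with admm_descent_algebra[OF multiplier mono_f mono_g mono_g'] show ?thesis
    by (simp add: energy_def iterate_def w defs)
qed

lemma norm_sq_le_energy: "norm v^2 \<le> energy v"
proof -
  obtain z e l where v: "v = (z, e, l)" by (cases v)
  show ?thesis
    using t_dominates[of z] by (simp add: v energy_def norm_Pair)
qed

lemma energy_nonneg: "0 \<le> energy v"
  using order_trans[OF zero_le_power2 norm_sq_le_energy] .

lemma energy_tendsto_zero:
  assumes "v \<longlonglongrightarrow> 0"
  shows "(\<lambda>k. energy (v k)) \<longlonglongrightarrow> 0"
proof -
  define z e l where "z k = fst (v k)" and "e k = fst (snd (v k))" and "l k = snd (snd (v k))" for k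
  have z: "z \<longlonglongrightarrow> 0" and e: "e \<longlonglongrightarrow> 0" and l: "l \<longlonglongrightarrow> 0"
    unfolding z_def e_def l_def
    using tendsto_fst[OF assms] tendsto_fst[OF tendsto_snd[OF assms]]
      tendsto_snd[OF tendsto_snd[OF assms]] by simp_all
  have "(\<lambda>k. L (z k)) \<longlonglongrightarrow> L 0"
    using linear_L by (intro bounded_linear.tendsto[OF _ z]) (simp add: linear_conv_bounded_linear)
  then have "(\<lambda>k. t * norm (z k)^2 - norm (L (z k))^2 + norm (e k)^2 + norm (l k)^2)
      \<longlonglongrightarrow> t * norm (0::'z)^2 - norm (L 0)^2 + norm (0::'e)^2 + norm (0::'e)^2"
    using z e l by (intro tendsto_intros)
  moreover have "energy (v k) = t * norm (z k)^2 - norm (L (z k))^2 + norm (e k)^2 + norm (l k)^2" for k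
    by (simp add: energy_def z_def e_def l_def case_prod_beta)
  ultimately show ?thesis
    by (simp add: linear_0[OF linear_L])
qed

context
  fixes w0 assumes kkt_w0: "kkt_point f g L X w0"
begin

lemma energy_decseq: "decseq (\<lambda>k. energy (iterate k - w0))"
proof (rule decseq_SucI)
  show "energy (iterate (Suc k) - w0) \<le> energy (iterate k - w0)" for k
    using energy_descent[OF kkt_w0, of k] energy_nonneg[of "iterate (Suc k) - iterate k"] by linarith
qed

lemma bounded_iterate: "bounded (range iterate)"
proof (rule bounded_subset[OF bounded_cball])
  have "norm (iterate k - w0)^2 \<le> energy (iterate 0 - w0)" for k
    using norm_sq_le_energy[of "iterate k - w0"] decseqD[OF energy_decseq le0, of k] by simp
  then show "range iterate \<subseteq> cball w0 (sqrt (energy (iterate 0 - w0)))"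
    by (auto simp: dist_norm norm_minus_commute real_le_rsqrt)
qed

lemma steps_tendsto_zero: "(\<lambda>k. iterate (Suc k) - iterate k) \<longlonglongrightarrow> 0"
proof (rule Lim_null_comparison_sq[OF always_eventually])
  let ?D = "\<lambda>k. energy (iterate (Suc k) - iterate k)"
  have telescope: "(\<Sum>k\<le>n. ?D k) + energy (iterate (Suc n) - w0) \<le> energy (iterate 0 - w0)" for n
  proof (induction n)
    case 0
    show ?case using energy_descent[OF kkt_w0, of 0] by simp
  next
    case (Suc n)
    then show ?case using energy_descent[OF kkt_w0, of "Suc n"] by simp
  qed
  have "summable ?D"
  proof (rule bounded_imp_summable)
    show "0 \<le> ?D k" for k by (rule energy_nonneg)
    show "sum ?D {..n} \<le> energy (iterate 0 - w0)" for n
      using telescope[of n] energy_nonneg[of "iterate (Suc n) - w0"] by linarith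
  qed
  then show "?D \<longlonglongrightarrow> 0" by (rule summable_LIMSEQ_zero)
  show "\<forall>k. norm (iterate (Suc k) - iterate k)^2 \<le> ?D k" by (simp add: norm_sq_le_energy)
qed

lemma residual_tendsto_zero: "(\<lambda>k. L (Z k) + E k - X) \<longlonglongrightarrow> 0"
proof -
  have "(\<lambda>k. snd (snd (iterate (Suc k) - iterate k))) \<longlonglongrightarrow> 0"
    using tendsto_snd[OF tendsto_snd[OF steps_tendsto_zero]] by simp
  then have "(\<lambda>k. L (Z (Suc k)) + E (Suc k) - X) \<longlonglongrightarrow> 0"
    by (simp add: iterate_def lam_step)
  then show ?thesis by (rule LIMSEQ_imp_Suc)
qed

lemma cluster_point_kkt:
  assumes "strict_mono r" and "(iterate \<circ> r) \<longlonglongrightarrow> w"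
  shows "kkt_point f g L X w"
proof -
  obtain Zi Ei li where w: "w = (Zi, Ei, li)" by (cases w)
  have Z_r: "(\<lambda>k. Z (r k)) \<longlonglongrightarrow> Zi" and E_r: "(\<lambda>k. E (r k)) \<longlonglongrightarrow> Ei"
    and lam_r: "(\<lambda>k. lam (r k)) \<longlonglongrightarrow> li"
    using tendsto_fst[OF assms(2)] tendsto_fst[OF tendsto_snd[OF assms(2)]]
      tendsto_snd[OF tendsto_snd[OF assms(2)]]
    by (simp_all add: w iterate_def o_def)
  have "(\<lambda>k. iterate (Suc (r k)) - iterate (r k)) \<longlonglongrightarrow> 0"
    using LIMSEQ_subseq_LIMSEQ[OF steps_tendsto_zero assms(1)] by (simp add: o_def)
  from tendsto_fst[OF this] have dZ_r: "(\<lambda>k. Z (Suc (r k)) - Z (r k)) \<longlonglongrightarrow> 0"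
    by (simp add: iterate_def)
  have Z_Suc_r: "(\<lambda>k. Z (Suc (r k))) \<longlonglongrightarrow> Zi"
    using tendsto_add[OF Z_r dZ_r] by simp
  have res_r: "(\<lambda>k. L (Z (r k)) + E (r k) - X) \<longlonglongrightarrow> 0"
    using LIMSEQ_subseq_LIMSEQ[OF residual_tendsto_zero assms(1)] by (simp add: o_def)
  have bounded_L: "bounded_linear L" and bounded_adj: "bounded_linear (adjoint L)"
    using linear_L adjoint_linear[OF linear_L] by (simp_all add: linear_conv_bounded_linear)
  have "(\<lambda>k. L (Z (r k)) + E (r k) - X) \<longlonglongrightarrow> L Zi + Ei - X"
    by (intro tendsto_diff tendsto_add tendsto_const bounded_linear.tendsto[OF bounded_L Z_r] E_r)
  from LIMSEQ_unique[OF this res_r] have feasible: "L Zi + Ei = X"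
    by simp
  have "- li \<in> subdiff g Ei"
    by (rule subdiff_limit[OF convex_on_continuous[OF open_UNIV convex_g] E_r tendsto_minus[OF lam_r]])
      (rule E_step)
  moreover have "(\<lambda>k. (- t) *\<^sub>R (Z (Suc (r k)) - Z (r k))
      - adjoint L (lam (r k) + (L (Z (r k)) + E (r k) - X))) \<longlonglongrightarrow> (- t) *\<^sub>R 0 - adjoint L (li + 0)"
    by (intro tendsto_diff tendsto_scaleR tendsto_const bounded_linear.tendsto[OF bounded_adj]
        tendsto_add dZ_r lam_r res_r)
  then have "(\<lambda>k. (- t) *\<^sub>R (Z (Suc (r k)) - Z (r k))
      - adjoint L (lam (r k) + (L (Z (r k)) + E (r k) - X))) \<longlonglongrightarrow> - adjoint L li"
    by simp
  then have "- adjoint L li \<in> subdiff f Zi"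
    by (rule subdiff_limit[OF convex_on_continuous[OF open_UNIV convex_f] Z_Suc_r]) (rule Z_step)
  ultimately show ?thesis
    using feasible by (simp add: w kkt_point_def)
qed

end

theorem iterate_converges_to_kkt_point:
  assumes "kkt_point f g L X w0"
  shows "\<exists>w. kkt_point f g L X w \<and> iterate \<longlonglongrightarrow> w"
proof -
  obtain r w where r: "strict_mono r" and lim: "(iterate \<circ> r) \<longlonglongrightarrow> w"
    using bounded_imp_convergent_subsequence[OF bounded_iterate[OF assms]] by blast
  have kkt: "kkt_point f g L X w"
    by (rule cluster_point_kkt[OF assms r lim])
  have "(\<lambda>k. iterate (r k) - w) \<longlonglongrightarrow> 0"
    using LIM_zero[OF lim] by (simp add: o_def)
  from energy_tendsto_zero[OF this] have "((\<lambda>k. energy (iterate k - w)) \<circ> r) \<longlonglongrightarrow> 0"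
    by (simp add: o_def)
  then have energy_lim: "(\<lambda>k. energy (iterate k - w)) \<longlonglongrightarrow> 0"
    by (rule decseq_tendsto_of_subseq[OF energy_decseq[OF kkt] r])
  have "(\<lambda>k. iterate k - w) \<longlonglongrightarrow> 0"
    by (rule Lim_null_comparison_sq[OF always_eventually energy_lim]) (simp add: norm_sq_le_energy)
  then show ?thesis
    using kkt LIM_zero_cancel by blast
qed

end

lemma exists_dominating_weight:
  fixes L :: "'a::euclidean_space \<Rightarrow> 'b::real_normed_vector"
  assumes "linear L"
  obtains t where "t > 0" and "\<And>z. norm (L z)^2 + norm z^2 \<le> t * norm z^2"
proof -
  obtain B where "B > 0" and B: "\<And>z. norm (L z) \<le> B * norm z"
    using linear_bounded_pos[OF assms] by blast
  have "norm (L z)^2 + norm z^2 \<le> (B^2 + 1) * norm z^2" for z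
    using power_mono[OF B[of z]] by (simp add: power_mult_distrib algebra_simps)
  moreover have "B^2 + 1 > 0"
    by (simp add: add_nonneg_pos)
  ultimately show ?thesis
    using that by blast
qed

lemma Omega_star_iff_kkt_point:
  "(Zs, Es, ms) \<in> Omega_star f g A X \<longleftrightarrow> kkt_point f g (\<lambda>Z. A ** Z) X (Zs, Es, - ms)"
  by (force simp: Omega_star_def kkt_point_def adjoint_matrix_matrix_mult)

lemma constant_parameters_in_S_set:
  fixes A :: "real^'d^'m" and t :: real
  assumes "0 \<le> \<sigma>" and "t > 0" and "\<And>Z::real^'n^'d. norm (A ** Z)^2 + norm Z^2 \<le> t * norm Z^2"
  shows "(A, (\<chi> i j. t) :: real^'n^'d, (\<chi> i j. 1) :: real^'n^'m) \<in> S_set \<sigma> A"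
proof -
  have "0 < inner (hprod (\<chi> i j. t) Z - transpose A ** hprod (\<chi> i j. 1) (A ** Z)) Z"
    if "Z \<noteq> 0" for Z :: "real^'n^'d"
  proof -
    have "inner (hprod (\<chi> i j. t) Z - transpose A ** hprod (\<chi> i j. 1) (A ** Z)) Z
        = t * norm Z^2 - norm (A ** Z)^2"
      by (simp add: hprod_const inner_diff_left inner_transpose_matrix_mult power2_norm_eq_inner)
    also have "\<dots> \<ge> norm Z^2"
      using assms(3)[of Z] by linarith
    finally show ?thesis
      using that by (smt (verit) zero_less_norm_iff zero_less_power)
  qed
  moreover have "spec_norm (A - A) = onorm (\<lambda>x::real^'d. 0 :: real^'m)"
    unfolding spec_norm_def by (rule arg_cong[where f = onorm]) (simp add: fun_eq_iff)
  ultimately show ?thesis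
    using assms(1,2) by (simp add: S_set_def onorm_zero)
qed

lemma dladmm_seq_linearized_admm:
  fixes A :: "real^'d^'m" and X :: "real^'n^'m" and t :: real
    and Z :: "nat \<Rightarrow> real^'n^'d" and E lam :: "nat \<Rightarrow> real^'n^'m"
  assumes "convex_on UNIV f" and "convex_on UNIV g" and "t > 0"
    and dominates: "\<And>Z::real^'n^'d. norm (A ** Z)^2 + norm Z^2 \<le> t * norm Z^2"
    and seq: "dladmm_seq f g A X (\<lambda>_. A) (\<lambda>_. \<chi> i j. t) (\<lambda>_. \<chi> i j. 1) Z E lam"
  shows "linearized_admm f g (\<lambda>Z. A ** Z) X t (\<lambda>k. Z (Suc k)) (\<lambda>k. E (Suc k)) (\<lambda>k. lam (Suc k))"
proof -
  have lam_step: "lam (Suc k) = lam k + (A ** Z (Suc k) + E (Suc k) - X)" for k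
    using seq by (simp add: dladmm_seq_def hprod_const)
  have Z_step: "(- t) *\<^sub>R (Z (Suc k) - Z k) - transpose A ** (lam k + (A ** Z k + E k - X))
      \<in> subdiff f (Z (Suc k))" for k
  proof -
    define c where "c = Z k - inverse t *\<^sub>R (transpose A ** (lam k + (A ** Z k + E k - X)))"
    have "f (Z (Suc k)) + t/2 * norm (Z (Suc k) - c)^2 \<le> f Y + t/2 * norm (Y - c)^2" for Y
      using seq by (simp add: dladmm_seq_def is_argmin_def wsq_const hprod_const hinv_const c_def
          algebra_simps)
    then have "(- t) *\<^sub>R (Z (Suc k) - c) \<in> subdiff f (Z (Suc k))"
      by (rule prox_argmin_subdiff[OF assms(1,3)])
    then show ?thesis
      using assms(3) by (simp add: c_def algebra_simps)
  qed
  have E_step: "- lam (Suc k) \<in> subdiff g (E (Suc k))" for k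
  proof -
    define c where "c = X - A ** Z (Suc k) - lam k"
    have "g (E (Suc k)) + 1/2 * norm (E (Suc k) - c)^2 \<le> g Y + 1/2 * norm (Y - c)^2" for Y
      using seq by (simp add: dladmm_seq_def is_argmin_def wsq_const hprod_const hinv_const c_def
          algebra_simps)
    then have "(- 1) *\<^sub>R (E (Suc k) - c) \<in> subdiff g (E (Suc k))"
      by (rule prox_argmin_subdiff[OF assms(2) zero_less_one])
    then show ?thesis
      by (simp add: c_def lam_step algebra_simps)
  qed
  show ?thesis
  proof (rule linearized_admm.intro)
    show "(- t) *\<^sub>R (Z (Suc (Suc k)) - Z (Suc k))
        - adjoint (\<lambda>Z. A ** Z) (lam (Suc k) + (A ** Z (Suc k) + E (Suc k) - X))
      \<in> subdiff f (Z (Suc (Suc k)))" for k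
      unfolding adjoint_matrix_matrix_mult by (rule Z_step)
  qed (fact assms(1,2) linear_matrix_matrix_mult dominates E_step lam_step)+
qed

lemma dladmm_seq_tendsto_Omega_star:
  fixes A :: "real^'d^'m" and X :: "real^'n^'m" and t :: real
    and Z :: "nat \<Rightarrow> real^'n^'d" and E lam :: "nat \<Rightarrow> real^'n^'m"
  assumes "convex_on UNIV f" and "convex_on UNIV g" and "t > 0"
    and "\<And>Z::real^'n^'d. norm (A ** Z)^2 + norm Z^2 \<le> t * norm Z^2"
    and "Omega_star f g A X \<noteq> {}"
    and "dladmm_seq f g A X (\<lambda>_. A) (\<lambda>_. \<chi> i j. t) (\<lambda>_. \<chi> i j. 1) Z E lam"
  shows "\<exists>\<omega>\<in>Omega_star f g A X. (\<lambda>k. (Z k, E k, - lam k)) \<longlonglongrightarrow> \<omega>"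
proof -
  interpret linearized_admm f g "\<lambda>Z. A ** Z" X t "\<lambda>k. Z (Suc k)" "\<lambda>k. E (Suc k)" "\<lambda>k. lam (Suc k)"
    by (rule dladmm_seq_linearized_admm[OF assms(1-4,6)])
  obtain Zs Es ms where "(Zs, Es, ms) \<in> Omega_star f g A X"
    using assms(5) by (metis ex_in_conv prod_cases3)
  then have "kkt_point f g (\<lambda>Z. A ** Z) X (Zs, Es, - ms)"
    by (simp add: Omega_star_iff_kkt_point)
  then obtain w where kkt: "kkt_point f g (\<lambda>Z. A ** Z) X w"
    and lim: "(\<lambda>k. (Z (Suc k), E (Suc k), lam (Suc k))) \<longlonglongrightarrow> w"
    using iterate_converges_to_kkt_point unfolding iterate_def by blast
  obtain Zi Ei li where w: "w = (Zi, Ei, li)"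
    by (cases w)
  have "(\<lambda>k. Z (Suc k)) \<longlonglongrightarrow> Zi" and "(\<lambda>k. E (Suc k)) \<longlonglongrightarrow> Ei"
    and "(\<lambda>k. lam (Suc k)) \<longlonglongrightarrow> li"
    using tendsto_fst[OF lim] tendsto_fst[OF tendsto_snd[OF lim]] tendsto_snd[OF tendsto_snd[OF lim]]
    by (simp_all add: w)
  then have "(\<lambda>k. (Z k, E k, - lam k)) \<longlonglongrightarrow> (Zi, Ei, - li)"
    by (intro LIMSEQ_imp_Suc[where f = "\<lambda>k. (Z k, E k, - lam k)"] tendsto_Pair tendsto_minus)
  moreover have "(Zi, Ei, - li) \<in> Omega_star f g A X"
    using kkt by (simp add: w Omega_star_iff_kkt_point)
  ultimately show ?thesis
    by blast
qed

theorem theorem1: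
  fixes A :: "real^'d^'m" and X :: "real^'n^'m"
    and f :: "real^'n^'d \<Rightarrow> real" and g :: "real^'n^'m \<Rightarrow> real"
    and c \<sigma> :: real
    and Z0 :: "real^'n^'d" and E0 :: "real^'n^'m" and lam0 :: "real^'n^'m"
  assumes "convex_on UNIV f" and "convex_on UNIV g"
    and "\<forall>s. 0 \<le> s \<and> s \<le> c \<longrightarrow> S_set s A \<noteq> {}"
    and "Omega_star f g A X \<noteq> {}"
    and "0 \<le> \<sigma>" and "\<sigma> \<le> c"
  shows "\<exists>W \<theta> \<beta>. (\<forall>k. (W k, \<theta> k, \<beta> k) \<in> S_set \<sigma> A) \<and>
     (\<forall>Z E lam. Z 0 = Z0 \<and> E 0 = E0 \<and> lam 0 = lam0 \<and> dladmm_seq f g A X W \<theta> \<beta> Z E lam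
        \<longrightarrow> (\<exists>\<omega>\<in>Omega_star f g A X. (\<lambda>k. (Z k, E k, - lam k)) \<longlonglongrightarrow> \<omega>))"
proof -
  obtain t where t: "t > 0" and dominates: "\<And>Z::real^'n^'d. norm (A ** Z)^2 + norm Z^2 \<le> t * norm Z^2"
    by (rule exists_dominating_weight[OF linear_matrix_matrix_mult]) (rule that)
  show ?thesis
  proof (intro exI conjI allI impI)
    show "(A, (\<chi> i j. t) :: real^'n^'d, (\<chi> i j. 1) :: real^'n^'m) \<in> S_set \<sigma> A" for k :: nat
      by (rule constant_parameters_in_S_set[OF assms(5) t dominates])
    fix Z E lam
    assume "Z 0 = Z0 \<and> E 0 = E0 \<and> lam 0 = lam0
      \<and> dladmm_seq f g A X (\<lambda>_. A) (\<lambda>_. \<chi> i j. t) (\<lambda>_. \<chi> i j. 1) Z E lam"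
    then show "\<exists>\<omega>\<in>Omega_star f g A X. (\<lambda>k. (Z k, E k, - lam k)) \<longlonglongrightarrow> \<omega>"
      by (elim conjE) (rule dladmm_seq_tendsto_Omega_star[OF assms(1,2) t dominates assms(4)])
  qed
qed

end
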